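(* For every $x\in H$, \[ S^{\delta,\mathscr{P}}_{\pi}(x)\le\sum_{a\in\mathcal{A}}\pi(a|x)\,Q^{\delta,\mathscr{P}}_{\pi}(x,a). \]
   Context: Consider a Markov decision process with a finite state set $\mathcal{X}$, viewed as a subset of $\mathbb{R}$ (so $|y-z|$ is the distance between states), and a finite action set $\mathcal{A}$. The state set is partitioned into a goal set $E$, a forbidden (unsafe) set $U$, and $H:=\mathcal{X}\setminus(E\cup U)$; $E$ and $U$ are terminal (the process stops there). For each $(x,a)\in H\times\mathcal{A}$ a nominal transition probability $\mathcal{P}_{x,a}=\{P_{x,a}(y)\}_{y\in\mathcal{X}}$ on $\mathcal{X}$ is given, and $\mathscr{P}=\{\mathcal{P}_{x,a}\}_{(x,a)\in H\times\mathcal{A}}$; transition probabilities are time-invariant. The sample space is $\Omega=(\mathcal{X}\times\mathcal{A})^{\infty}$ with coordinate processes $X_t,A_t$. A stationary policy is $\pi:\mathcal{X}\to\mathscr{M}(\mathcal{A})$, written $\pi(a|x)$. For any collection $\tilde{\mathscr{P}}=\{\tilde{\mathcal{P}}_{x,a}\}_{(x,a)\in H\times\mathcal{A}}$ of transition probabilities, $\mathbb{P}^{\tilde{\mathscr{P}}}_{\pi}$ and $\mathbb{E}^{\tilde{\mathscr{P}}}_{\pi}$ denote probability and expectation for the process with $X_{t+1}\sim\tilde{\mathcal{P}}_{X_t,A_t}$ and $A_t\sim\pi(\cdot|X_t)$ (except when $A_0$ is conditioned on). For $S\subseteq\mathcal{X}$, $\tau_S$ is the first hitting time of $S$, and $\tau=\tau_{E\cup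 U}$. The 1-Wasserstein distance between probability measures $\mu,\nu$ on $\mathcal{X}$ is $W(\mu,\nu)=\min\{\sum_{(y,z)}\Gamma(y,z)|y-z| : \Gamma\in\mathscr{M}(\mathcal{X}\times\mathcal{X}),\ \sum_z\Gamma(y,z)=\mu(y),\ \sum_y\Gamma(y,z)=\nu(z)\}$. For $\delta\ge0$, $\mathcal{D}^{\delta}_{x,a}=\{\tilde{\mathcal{P}}_{x,a}\in\mathscr{M}(\mathcal{X}): W(\tilde{\mathcal{P}}_{x,a},\mathcal{P}_{x,a})\le\delta\}$ and $\mathscr{D}^{\delta}=\prod_{(x,a)\in H\times\mathcal{A}}\mathcal{D}^{\delta}_{x,a}$. The robust safety function is $S^{\delta,\mathscr{P}}_{\pi}(x)=\sup_{\tilde{\mathscr{P}}\in\mathscr{D}^{\delta}}\mathbb{P}^{\tilde{\mathscr{P}}}_{\pi}[\tau_U<\tau_E\mid X_0=x]$ for $x\in H$. The robust Q-function is, for $(x,a)\in H\times\mathcal{A}$, $Q^{\delta,\mathscr{P}}_{\pi}(x,a)=\sup_{\tilde{\mathscr{P}}\in\mathscr{D}^{\delta}}\mathbb{E}^{\tilde{\mathscr{P}}}_{\pi}\big[\sum_{t=0}^{\tau-1}c_{t+1}\mid X_0=x,A_0=a\big]$, where $c_{t+1}=1$ if $X_{t+1}\in U$ and $0$ otherwise. *)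

theory Defs
  imports "HOL-Analysis.Analysis"
begin

definition is_dist :: "'b set \<Rightarrow> ('b \<Rightarrow> real) \<Rightarrow> bool" where
  "is_dist S \<mu> \<longleftrightarrow> (\<forall>y. 0 \<le> \<mu> y) \<and> (\<forall>y. y \<notin> S \<longrightarrow> \<mu> y = 0) \<and> sum \<mu> S = 1"

definition couplings :: "real set \<Rightarrow> (real \<Rightarrow> real) \<Rightarrow> (real \<Rightarrow> real) \<Rightarrow> (real \<times> real \<Rightarrow> real) set" where
  "couplings Xs \<mu> \<nu> = {\<Gamma>. is_dist (Xs \<times> Xs) \<Gamma>
      \<and> (\<forall>y\<in>Xs. (\<Sum>z\<in>Xs. \<Gamma> (y, z)) = \<mu> y)
      \<and> (\<forall>z\<in>Xs. (\<Sum>y\<in>Xs. \<Gamma> (y, z)) = \<nu> z)}"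

text \<open>1-Wasserstein distance (the minimum is attained; we write it as the infimum).\<close>
definition wasserstein :: "real set \<Rightarrow> (real \<Rightarrow> real) \<Rightarrow> (real \<Rightarrow> real) \<Rightarrow> real" where
  "wasserstein Xs \<mu> \<nu> = Inf ((\<lambda>\<Gamma>. \<Sum>(y, z)\<in>Xs \<times> Xs. \<Gamma> (y, z) * \<bar>y - z\<bar>) ` couplings Xs \<mu> \<nu>)"

text \<open>Ambiguity set: collections of transition probabilities (indexed by (x,a) in H \<times> As)
  within Wasserstein distance \<delta> of the nominal ones.\<close>
definition ambiguity_set ::
  "real set \<Rightarrow> 'a set \<Rightarrow> real set \<Rightarrow> real set \<Rightarrow> (real \<Rightarrow> 'a \<Rightarrow> real \<Rightarrow> real) \<Rightarrow> real
    \<Rightarrow> (real \<Rightarrow> 'a \<Rightarrow> real \<Rightarrow> real) set" where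
  "ambiguity_set Xs As E U P \<delta> = {Pt. \<forall>x\<in>Xs - (E \<union> U). \<forall>a\<in>As.
      is_dist Xs (Pt x a) \<and> wasserstein Xs (Pt x a) (P x a) \<le> \<delta>}"

text \<open>first_hitU Xs As E U Pt \<pi> n x  =  P^{Pt}_\<pi>[X_0,...,X_{n-1} \<in> H, X_n \<in> U | X_0 = x],
  i.e. the probability that the first visit to E \<union> U happens at time n and lies in U
  (the process stops in the terminal sets E and U).\<close>
fun first_hitU ::
  "real set \<Rightarrow> 'a set \<Rightarrow> real set \<Rightarrow> real set \<Rightarrow> (real \<Rightarrow> 'a \<Rightarrow> real \<Rightarrow> real)
    \<Rightarrow> (real \<Rightarrow> 'a \<Rightarrow> real) \<Rightarrow> nat \<Rightarrow> real \<Rightarrow> real" where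
  "first_hitU Xs As E U Pt \<pi> 0 x = (if x \<in> U then 1 else 0)"
| "first_hitU Xs As E U Pt \<pi> (Suc n) x =
     (if x \<in> Xs - (E \<union> U)
      then (\<Sum>a\<in>As. \<pi> x a * (\<Sum>y\<in>Xs. Pt x a y * first_hitU Xs As E U Pt \<pi> n y))
      else 0)"

text \<open>P^{Pt}_\<pi>[\<tau>_U < \<tau>_E | X_0 = x] as the sum over the disjoint events {\<tau> = n, X_n \<in> U}.\<close>
definition unsafe_prob ::
  "real set \<Rightarrow> 'a set \<Rightarrow> real set \<Rightarrow> real set \<Rightarrow> (real \<Rightarrow> 'a \<Rightarrow> real \<Rightarrow> real)
    \<Rightarrow> (real \<Rightarrow> 'a \<Rightarrow> real) \<Rightarrow> real \<Rightarrow> real" where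
  "unsafe_prob Xs As E U Pt \<pi> x = (\<Sum>n. first_hitU Xs As E U Pt \<pi> n x)"

text \<open>E^{Pt}_\<pi>[\<Sum>_{t=0}^{\<tau>-1} c_{t+1} | X_0 = x, A_0 = a]
  = \<Sum>_t P[t < \<tau>, X_{t+1} \<in> U | X_0 = x, A_0 = a]
  = \<Sum>_t P[X_0..X_t \<in> H, X_{t+1} \<in> U | X_0 = x, A_0 = a].\<close>
definition expected_cost ::
  "real set \<Rightarrow> 'a set \<Rightarrow> real set \<Rightarrow> real set \<Rightarrow> (real \<Rightarrow> 'a \<Rightarrow> real \<Rightarrow> real)
    \<Rightarrow> (real \<Rightarrow> 'a \<Rightarrow> real) \<Rightarrow> real \<Rightarrow> 'a \<Rightarrow> real" where
  "expected_cost Xs As E U Pt \<pi> x a =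
     (\<Sum>t. \<Sum>y\<in>Xs. Pt x a y * first_hitU Xs As E U Pt \<pi> t y)"

definition robust_safety ::
  "real set \<Rightarrow> 'a set \<Rightarrow> real set \<Rightarrow> real set \<Rightarrow> (real \<Rightarrow> 'a \<Rightarrow> real \<Rightarrow> real) \<Rightarrow> real
    \<Rightarrow> (real \<Rightarrow> 'a \<Rightarrow> real) \<Rightarrow> real \<Rightarrow> real" where
  "robust_safety Xs As E U P \<delta> \<pi> x =
     (SUP Pt\<in>ambiguity_set Xs As E U P \<delta>. unsafe_prob Xs As E U Pt \<pi> x)"

definition robust_Q ::
  "real set \<Rightarrow> 'a set \<Rightarrow> real set \<Rightarrow> real set \<Rightarrow> (real \<Rightarrow> 'a \<Rightarrow> real \<Rightarrow> real) \<Rightarrow> real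
    \<Rightarrow> (real \<Rightarrow> 'a \<Rightarrow> real) \<Rightarrow> real \<Rightarrow> 'a \<Rightarrow> real" where
  "robust_Q Xs As E U P \<delta> \<pi> x a =
     (SUP Pt\<in>ambiguity_set Xs As E U P \<delta>. expected_cost Xs As E U Pt \<pi> x a)"

end

theory Submission
  imports Defs
begin

text \<open>For a fixed transition kernel, conditioning on the first action shows that the probability
  of entering U before E equals the policy average of the expected cost, since the cost counts
  exactly the (at most one) entrance into U. The robust quantities are suprema over the
  ambiguity set, which contains the nominal kernel, and a supremum of averages is at most the
  average of the suprema; all quantities lie in [0,1], so the suprema are finite.\<close>

lemma is_dist_nonneg: "is_dist S \<mu> \<Longrightarrow> 0 \<le> \<mu> y"
  by (simp add: is_dist_def)

lemma is_dist_sum: "is_dist S \<mu> \<Longrightarrow> sum \<mu> S = 1"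
  by (simp add: is_dist_def)

lemma wasserstein_self_le_0:
  assumes "finite Xs" and "is_dist Xs \<mu>"
  shows "wasserstein Xs \<mu> \<mu> \<le> 0"
proof -
  define \<Gamma> where "\<Gamma> = (\<lambda>(y::real, z::real). if y = z then \<mu> y else 0)"
  let ?cost = "\<lambda>\<Gamma>. \<Sum>(y, z)\<in>Xs \<times> Xs. \<Gamma> (y, z) * \<bar>y - z\<bar>"
  have "(\<Sum>p\<in>Xs \<times> Xs. \<Gamma> p) = (\<Sum>y\<in>Xs. \<Sum>z\<in>Xs. \<Gamma> (y, z))"
    by (simp add: sum.cartesian_product)
  also have "\<dots> = (\<Sum>y\<in>Xs. \<mu> y)"
    using assms(1) by (simp add: \<Gamma>_def)
  finally have coupling: "\<Gamma> \<in> couplings Xs \<mu> \<mu>"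
    using assms unfolding couplings_def is_dist_def \<Gamma>_def by auto
  have bounded: "bdd_below (?cost ` couplings Xs \<mu> \<mu>)"
    by (rule bdd_belowI[where m = 0]) (auto simp: couplings_def is_dist_def intro!: sum_nonneg)
  have "wasserstein Xs \<mu> \<mu> \<le> ?cost \<Gamma>"
    unfolding wasserstein_def using bounded coupling by (rule cINF_lower)
  also have "?cost \<Gamma> = 0"
    by (rule sum.neutral) (auto simp: \<Gamma>_def)
  finally show ?thesis .
qed

lemma nominal_in_ambiguity_set:
  assumes "finite Xs" and "\<forall>y\<in>Xs - (E \<union> U). \<forall>a\<in>As. is_dist Xs (P y a)" and "0 \<le> \<delta>"
  shows "P \<in> ambiguity_set Xs As E U P \<delta>"
  using assms wasserstein_self_le_0 unfolding ambiguity_set_def by fastforce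

lemma SUP_weighted_sum_le_weighted_sum_SUP:
  fixes f :: "'p \<Rightarrow> 'i \<Rightarrow> real"
  assumes "A \<noteq> {}"
    and "\<And>i. i \<in> I \<Longrightarrow> bdd_above ((\<lambda>p. f p i) ` A)"
    and "\<And>i. i \<in> I \<Longrightarrow> 0 \<le> w i"
  shows "(SUP p\<in>A. \<Sum>i\<in>I. w i * f p i) \<le> (\<Sum>i\<in>I. w i * (SUP p\<in>A. f p i))"
proof (rule cSUP_least[OF assms(1)])
  fix p assume "p \<in> A"
  then show "(\<Sum>i\<in>I. w i * f p i) \<le> (\<Sum>i\<in>I. w i * (SUP p\<in>A. f p i))"
    using assms(2,3) by (intro sum_mono mult_left_mono cSUP_upper) auto
qed

context
  fixes Xs :: "real set" and As :: "'a set" and E U :: "real set"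
    and Pt :: "real \<Rightarrow> 'a \<Rightarrow> real \<Rightarrow> real" and \<pi> :: "real \<Rightarrow> 'a \<Rightarrow> real"
  assumes kernel_dist: "\<forall>y\<in>Xs - (E \<union> U). \<forall>a\<in>As. is_dist Xs (Pt y a)"
    and policy_dist: "\<forall>y\<in>Xs. is_dist As (\<pi> y)"
begin

lemma first_hitU_nonneg: "0 \<le> first_hitU Xs As E U Pt \<pi> n y"
proof (induction n arbitrary: y)
  case 0
  then show ?case by simp
next
  case (Suc n)
  show ?case
  proof (cases "y \<in> Xs - (E \<union> U)")
    case True
    then have "\<And>a z. a \<in> As \<Longrightarrow> 0 \<le> Pt y a z" and "\<And>a. 0 \<le> \<pi> y a"
      using kernel_dist policy_dist by (auto intro: is_dist_nonneg)
    with True Suc.IH show ?thesis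
      by (auto intro!: sum_nonneg mult_nonneg_nonneg)
  next
    case False
    then show ?thesis by auto
  qed
qed

lemma kernel_average_le_1:
  assumes "y \<in> Xs - (E \<union> U)" and "a \<in> As" and "\<And>z. z \<in> Xs \<Longrightarrow> g z \<le> 1"
  shows "(\<Sum>z\<in>Xs. Pt y a z * g z) \<le> 1"
proof -
  have d: "is_dist Xs (Pt y a)"
    using assms(1,2) kernel_dist by auto
  have "(\<Sum>z\<in>Xs. Pt y a z * g z) \<le> (\<Sum>z\<in>Xs. Pt y a z * 1)"
    using assms(3) by (intro sum_mono mult_left_mono is_dist_nonneg[OF d])
  also have "\<dots> = 1"
    using d by (simp add: is_dist_sum)
  finally show ?thesis .
qed

lemma sum_first_hitU_le_1: "(\<Sum>k<n. first_hitU Xs As E U Pt \<pi> k y) \<le> 1"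
proof (induction n arbitrary: y)
  case 0
  then show ?case by simp
next
  case (Suc n)
  let ?f = "first_hitU Xs As E U Pt \<pi>"
  have split: "(\<Sum>k<Suc n. ?f k y) = ?f 0 y + (\<Sum>k<n. ?f (Suc k) y)"
    by (rule sum.lessThan_Suc_shift)
  show ?case
  proof (cases "y \<in> Xs - (E \<union> U)")
    case True
    then have p: "is_dist As (\<pi> y)"
      using policy_dist by auto
    have "(\<Sum>k<n. ?f (Suc k) y) = (\<Sum>a\<in>As. \<pi> y a * (\<Sum>z\<in>Xs. Pt y a z * (\<Sum>k<n. ?f k z)))"
      using True by (simp add: sum_distrib_left sum.swap[of _ "{..<n}"] mult.assoc)
    also have "\<dots> \<le> (\<Sum>a\<in>As. \<pi> y a * 1)"
      using True Suc.IH by (intro sum_mono mult_left_mono is_dist_nonneg[OF p] kernel_average_le_1)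
    also have "\<dots> = 1"
      using p by (simp add: is_dist_sum)
    finally show ?thesis
      using split True by simp
  next
    case False
    then have "(\<Sum>k<n. ?f (Suc k) y) = 0"
      by auto
    then show ?thesis
      using split by simp
  qed
qed

lemma summable_first_hitU: "summable (\<lambda>n. first_hitU Xs As E U Pt \<pi> n y)"
  by (rule summableI_nonneg_bounded[where x = 1]) (auto intro: first_hitU_nonneg sum_first_hitU_le_1)

lemma expected_cost_partial_sum_le_1:
  assumes "x \<in> Xs - (E \<union> U)" and "a \<in> As"
  shows "(\<Sum>t<n. \<Sum>y\<in>Xs. Pt x a y * first_hitU Xs As E U Pt \<pi> t y) \<le> 1"
proof -
  have "(\<Sum>t<n. \<Sum>y\<in>Xs. Pt x a y * first_hitU Xs As E U Pt \<pi> t y)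
      = (\<Sum>y\<in>Xs. Pt x a y * (\<Sum>t<n. first_hitU Xs As E U Pt \<pi> t y))"
    by (simp add: sum_distrib_left sum.swap[of _ "{..<n}"])
  also have "\<dots> \<le> 1"
    by (intro kernel_average_le_1[OF assms] sum_first_hitU_le_1)
  finally show ?thesis .
qed

lemma summable_expected_cost:
  assumes "x \<in> Xs - (E \<union> U)" and "a \<in> As"
  shows "summable (\<lambda>t. \<Sum>y\<in>Xs. Pt x a y * first_hitU Xs As E U Pt \<pi> t y)"
proof (rule summableI_nonneg_bounded[where x = 1])
  have d: "is_dist Xs (Pt x a)"
    using assms kernel_dist by auto
  show "0 \<le> (\<Sum>y\<in>Xs. Pt x a y * first_hitU Xs As E U Pt \<pi> t y)" for t
    by (intro sum_nonneg mult_nonneg_nonneg is_dist_nonneg[OF d] first_hitU_nonneg)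
qed (rule expected_cost_partial_sum_le_1[OF assms])

lemma expected_cost_le_1:
  assumes "x \<in> Xs - (E \<union> U)" and "a \<in> As"
  shows "expected_cost Xs As E U Pt \<pi> x a \<le> 1"
  unfolding expected_cost_def
  using summable_expected_cost[OF assms] expected_cost_partial_sum_le_1[OF assms]
  by (rule suminf_le_const)

lemma unsafe_prob_eq_policy_average:
  assumes x: "x \<in> Xs - (E \<union> U)"
  shows "unsafe_prob Xs As E U Pt \<pi> x = (\<Sum>a\<in>As. \<pi> x a * expected_cost Xs As E U Pt \<pi> x a)"
proof -
  let ?f = "first_hitU Xs As E U Pt \<pi>"
  let ?g = "\<lambda>a t. \<Sum>y\<in>Xs. Pt x a y * ?f t y"
  have "unsafe_prob Xs As E U Pt \<pi> x = (\<Sum>t. ?f (Suc t) x) + ?f 0 x"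
    unfolding unsafe_prob_def using suminf_split_head[OF summable_first_hitU] by simp
  also have "\<dots> = (\<Sum>t. \<Sum>a\<in>As. \<pi> x a * ?g a t)"
    using x by simp
  also have "\<dots> = (\<Sum>a\<in>As. \<Sum>t. \<pi> x a * ?g a t)"
    using summable_expected_cost[OF x] by (intro suminf_sum summable_mult) auto
  also have "\<dots> = (\<Sum>a\<in>As. \<pi> x a * expected_cost Xs As E U Pt \<pi> x a)"
    unfolding expected_cost_def
    using summable_expected_cost[OF x] by (intro sum.cong refl suminf_mult) auto
  finally show ?thesis .
qed

end

theorem mainTheorem3:
  fixes Xs :: "real set" and As :: "'a set" and E U :: "real set"
    and P :: "real \<Rightarrow> 'a \<Rightarrow> real \<Rightarrow> real" and \<pi> :: "real \<Rightarrow> 'a \<Rightarrow> real"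
    and \<delta> :: real and x :: real
  assumes "finite Xs" and "finite As" and "As \<noteq> {}"
    and "E \<subseteq> Xs" and "U \<subseteq> Xs" and "E \<inter> U = {}"
    and "\<forall>y\<in>Xs - (E \<union> U). \<forall>a\<in>As. is_dist Xs (P y a)"
    and "\<forall>y\<in>Xs. is_dist As (\<pi> y)"
    and "0 \<le> \<delta>"
    and "x \<in> Xs - (E \<union> U)"
  shows "robust_safety Xs As E U P \<delta> \<pi> x
           \<le> (\<Sum>a\<in>As. \<pi> x a * robust_Q Xs As E U P \<delta> \<pi> x a)"
proof -
  let ?A = "ambiguity_set Xs As E U P \<delta>"
  have kernel_dist: "\<forall>y\<in>Xs - (E \<union> U). \<forall>a\<in>As. is_dist Xs (Pt y a)" if "Pt \<in> ?A" for Pt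
    using that by (auto simp: ambiguity_set_def)
  have nonempty: "?A \<noteq> {}"
    using nominal_in_ambiguity_set[OF assms(1,7,9)] by blast
  have bounded: "bdd_above ((\<lambda>Pt. expected_cost Xs As E U Pt \<pi> x a) ` ?A)" if "a \<in> As" for a
  proof (rule bdd_aboveI[where M = 1])
    fix c assume "c \<in> (\<lambda>Pt. expected_cost Xs As E U Pt \<pi> x a) ` ?A"
    then show "c \<le> 1"
      using expected_cost_le_1[OF kernel_dist assms(8,10) that] by blast
  qed
  have "is_dist As (\<pi> x)"
    using assms(8,10) by blast
  then have weights_nonneg: "0 \<le> \<pi> x a" for a
    by (rule is_dist_nonneg)
  have "robust_safety Xs As E U P \<delta> \<pi> x
      = (SUP Pt\<in>?A. \<Sum>a\<in>As. \<pi> x a * expected_cost Xs As E U Pt \<pi> x a)"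
    unfolding robust_safety_def
    using unsafe_prob_eq_policy_average[OF kernel_dist assms(8,10)] by (rule SUP_cong[OF refl])
  also have "\<dots> \<le> (\<Sum>a\<in>As. \<pi> x a * robust_Q Xs As E U P \<delta> \<pi> x a)"
    unfolding robust_Q_def using nonempty bounded weights_nonneg
    by (rule SUP_weighted_sum_le_weighted_sum_SUP)
  finally show ?thesis .
qed

end
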